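(* Let $r\geq 2$. Then $Z_{+}(K_r\,\square\, K_r)=M_{+}(K_r\,\square\, K_r)=(r-1)^2+1$.
   Context: $K_r$ is the complete graph on $r$ vertices. The Cartesian product $G\,\square\, G'$ has vertex set $V(G)\times V(G')$, with $(g,g')$ adjacent to $(h,h')$ if and only if either $g=h$ and $\{g',h'\}\in E(G')$, or $g'=h'$ and $\{g,h\}\in E(G)$. The positive semidefinite zero forcing number $Z_{+}(G)$ is the minimum size of a set $S\subseteq V(G)$ such that, coloring $S$ blue and all other vertices white, repeated application of the following rule makes all vertices blue: a white vertex $v$ becomes blue if it is a neighbor of a blue vertex $u$ and no other white neighbor of $u$ is connected to $v$ by a path all of whose vertices are white. $M_{+}(G)$ is the maximum nullity over all real symmetric positive semidefinite $n\times n$ matrices $B=[b_{ij}]$ such that for $i\neq j$, $b_{ij}\neq 0$ if and only if $\{i,j\}$ is an edge of $G$ (diagonal entries unrestricted). *)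

theory Defs
  imports Main "Jordan_Normal_Form.Matrix_Kernel"
begin

text \<open>Graphs on vertex set {0..<n} are given by n and an adjacency relation E.\<close>

text \<open>K_r box K_r: vertex (a,b) with a,b < r is encoded as the number a*r+b.\<close>

definition Kr_box_Kr :: "nat \<Rightarrow> nat \<Rightarrow> nat \<Rightarrow> bool" where
  "Kr_box_Kr r x y \<longleftrightarrow> x < r * r \<and> y < r * r \<and>
     ((x div r = y div r \<and> x mod r \<noteq> y mod r) \<or>
      (x mod r = y mod r \<and> x div r \<noteq> y div r))"

definition white_conn :: "(nat \<Rightarrow> nat \<Rightarrow> bool) \<Rightarrow> nat set \<Rightarrow> nat \<Rightarrow> nat \<Rightarrow> bool" where
  "white_conn E W x y \<longleftrightarrow> x \<in> W \<and> (\<lambda>a b. a \<in> W \<and> b \<in> W \<and> E a b)\<^sup>*\<^sup>* x y"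

definition psd_force :: "nat \<Rightarrow> (nat \<Rightarrow> nat \<Rightarrow> bool) \<Rightarrow> nat set \<Rightarrow> nat \<Rightarrow> nat \<Rightarrow> bool" where
  "psd_force n E B u v \<longleftrightarrow> u \<in> B \<and> v \<in> {0..<n} - B \<and> E u v \<and>
     (\<forall>w. w \<in> {0..<n} - B \<and> E u w \<and> w \<noteq> v \<longrightarrow> \<not> white_conn E ({0..<n} - B) w v)"

inductive psd_reach :: "nat \<Rightarrow> (nat \<Rightarrow> nat \<Rightarrow> bool) \<Rightarrow> nat set \<Rightarrow> nat set \<Rightarrow> bool"
  for n E S where
  init: "psd_reach n E S S"
| step: "psd_reach n E S B \<Longrightarrow> psd_force n E B u v \<Longrightarrow> psd_reach n E S (insert v B)"

definition psd_zero_forcing_set :: "nat \<Rightarrow> (nat \<Rightarrow> nat \<Rightarrow> bool) \<Rightarrow> nat set \<Rightarrow> bool" where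
  "psd_zero_forcing_set n E S \<longleftrightarrow> S \<subseteq> {0..<n} \<and> psd_reach n E S {0..<n}"

definition Zplus :: "nat \<Rightarrow> (nat \<Rightarrow> nat \<Rightarrow> bool) \<Rightarrow> nat" where
  "Zplus n E = (LEAST k. \<exists>S. psd_zero_forcing_set n E S \<and> card S = k)"

definition psd_mat :: "real mat \<Rightarrow> bool" where
  "psd_mat A \<longleftrightarrow> A \<in> carrier_mat (dim_row A) (dim_row A) \<and> A\<^sup>T = A \<and>
     (\<forall>x \<in> carrier_vec (dim_row A). x \<bullet> (A *\<^sub>v x) \<ge> 0)"

definition graph_psd_mats :: "nat \<Rightarrow> (nat \<Rightarrow> nat \<Rightarrow> bool) \<Rightarrow> real mat set" where
  "graph_psd_mats n E = {A. A \<in> carrier_mat n n \<and> psd_mat A \<and>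
     (\<forall>i<n. \<forall>j<n. i \<noteq> j \<longrightarrow> (A $$ (i, j) \<noteq> 0 \<longleftrightarrow> E i j))}"

definition Mplus :: "nat \<Rightarrow> (nat \<Rightarrow> nat \<Rightarrow> bool) \<Rightarrow> nat" where
  "Mplus n E = (GREATEST k. \<exists>A \<in> graph_psd_mats n E. kernel_dim A = k)"

end

theory Submission
  imports Defs
begin

text \<open>Upper bound: the vertex (0, 0) together with all (a, b) with a, b \<ge> 1 is a PSD zero
  forcing set. Its white vertices form two cliques, row 0 and column 0, with no edges between
  them, so (1, 1) may force (1, 0); after that every (1, b) forces (0, b) and every (a, 1)
  forces (a, 0). Lower bound: the matrix 2 r (I \<otimes> J) + J \<otimes> diag(-1, 2 (r - 1), ..., 2 (r - 1)),
  with J the all-ones matrix, has the zero pattern of K_r \<box> K_r, is positive semidefinite by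
  Cauchy-Schwarz and has (r - 1)^2 + 1 independent kernel vectors. The bounds meet because
  M_+ \<le> Z_+: a kernel vector of a matrix in S_+(G) that vanishes on the blue set also vanishes
  on every vertex forced next.\<close>

section \<open>Positive semidefinite forms\<close>

definition bilin_form :: "real mat \<Rightarrow> (nat \<Rightarrow> real) \<Rightarrow> (nat \<Rightarrow> real) \<Rightarrow> real" where
  "bilin_form A f g = (\<Sum>i<dim_row A. f i * (\<Sum>j<dim_col A. A $$ (i, j) * g j))"

lemma mult_mat_vec_vec_index:
  assumes "A \<in> carrier_mat nr nc" and "i < nr"
  shows "(A *\<^sub>v vec nc g) $ i = (\<Sum>j<nc. A $$ (i, j) * g j)"
  using assms by (auto simp: scalar_prod_def atLeast0LessThan intro!: sum.cong)

lemma scalar_prod_mult_mat_vec_eq_bilin_form: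
  assumes "A \<in> carrier_mat n n"
  shows "vec n f \<bullet> (A *\<^sub>v vec n g) = bilin_form A f g"
  using assms by (auto simp: scalar_prod_def atLeast0LessThan bilin_form_def
      mult_mat_vec_vec_index intro!: sum.cong)

lemma bilin_form_nonneg_if_psd_mat:
  assumes "psd_mat A"
  shows "0 \<le> bilin_form A f f"
proof -
  have A: "A \<in> carrier_mat (dim_row A) (dim_row A)" using assms by (simp add: psd_mat_def)
  have "0 \<le> vec (dim_row A) f \<bullet> (A *\<^sub>v vec (dim_row A) f)"
    using assms by (simp add: psd_mat_def)
  then show ?thesis using scalar_prod_mult_mat_vec_eq_bilin_form[OF A] by simp
qed

lemma bilin_form_commute:
  assumes "A \<in> carrier_mat n n" and "A\<^sup>T = A"
  shows "bilin_form A f g = bilin_form A g f"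
proof -
  have entry: "A $$ (i, j) = A $$ (j, i)" if "i < n" "j < n" for i j
    using assms that by (metis carrier_matD index_transpose_mat(1))
  have "bilin_form A f g = (\<Sum>i<n. \<Sum>j<n. f i * A $$ (i, j) * g j)"
    using assms(1) by (simp add: bilin_form_def sum_distrib_left mult.assoc)
  also have "\<dots> = (\<Sum>j<n. \<Sum>i<n. f i * A $$ (i, j) * g j)"
    by (rule sum.swap)
  also have "\<dots> = bilin_form A g f"
    using assms(1) entry by (auto simp: bilin_form_def sum_distrib_left mult_ac intro!: sum.cong)
  finally show ?thesis .
qed

lemma bilin_form_add_smult:
  "bilin_form A (\<lambda>i. f i + t * g i) (\<lambda>i. f i + t * g i) =
   bilin_form A f f + t * (bilin_form A f g + bilin_form A g f) + t\<^sup>2 * bilin_form A g g"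
  by (simp add: bilin_form_def algebra_simps sum.distrib sum_distrib_left power2_eq_square)

lemma linear_coeff_eq_0_if_quadratic_nonneg:
  fixes a b :: real
  assumes "\<And>t. 0 \<le> a * t + b * t\<^sup>2"
  shows "a = 0"
proof (rule ccontr)
  assume "a \<noteq> 0"
  define s where "s = 1 / (\<bar>b\<bar> + 1)"
  have s: "0 < s" "b * s < 1"
    by (auto simp: s_def field_simps)
  have "a * (- a * s) + b * (- a * s)\<^sup>2 = a\<^sup>2 * s * (b * s - 1)"
    by (simp add: algebra_simps power2_eq_square)
  also have "\<dots> < 0"
    using \<open>a \<noteq> 0\<close> s by (simp add: mult_pos_neg)
  finally show False using assms[of "- a * s"] by simp
qed

lemma psd_mat_row_sum_eq_0_if_bilin_form_eq_0:
  assumes A: "A \<in> carrier_mat n n" and psd: "psd_mat A"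
    and y: "bilin_form A y y = 0" and i: "i < n"
  shows "(\<Sum>j<n. A $$ (i, j) * y j) = 0"
proof -
  define w where "w i = (\<Sum>j<n. A $$ (i, j) * y j)" for i
  define S where "S = (\<Sum>i<n. (w i)\<^sup>2)"
  have sym: "A\<^sup>T = A" using psd by (simp add: psd_mat_def)
  have "bilin_form A w y = S"
    using A by (simp add: bilin_form_def S_def w_def power2_eq_square)
  moreover have "bilin_form A y w = bilin_form A w y"
    by (rule bilin_form_commute[OF A sym])
  ultimately have "0 \<le> (2 * S) * t + bilin_form A w w * t\<^sup>2" for t
    using bilin_form_nonneg_if_psd_mat[OF psd, of "\<lambda>i. y i + t * w i"]
    unfolding bilin_form_add_smult y by (simp add: algebra_simps)
  then have "S = 0" using linear_coeff_eq_0_if_quadratic_nonneg by fastforce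
  then have "\<forall>i\<in>{..<n}. (w i)\<^sup>2 = 0"
    unfolding S_def by (subst sum_nonneg_eq_0_iff[symmetric]) auto
  then show ?thesis using i by (simp add: w_def)
qed

lemma graph_psd_mats_edge_sym:
  assumes "A \<in> graph_psd_mats n E" and "i < n" and "j < n" and "E i j"
  shows "E j i"
proof (cases "i = j")
  case False
  have "A\<^sup>T = A" and "A \<in> carrier_mat n n"
    using assms(1) by (auto simp: graph_psd_mats_def psd_mat_def)
  then have "A $$ (j, i) = A $$ (i, j)"
    using assms(2,3) by (metis carrier_matD index_transpose_mat(1))
  moreover have "A $$ (i, j) \<noteq> 0 \<longleftrightarrow> E i j" and "A $$ (j, i) \<noteq> 0 \<longleftrightarrow> E j i"
    using assms(1-3) False unfolding graph_psd_mats_def by auto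
  ultimately show ?thesis using assms(4) by simp
qed (use assms(4) in simp)

section \<open>Forcing and kernel vectors\<close>

lemma white_conn_step:
  assumes "white_conn E W i v" and "j \<in> W" and "E j i"
  shows "white_conn E W j v"
  using assms unfolding white_conn_def by (auto intro: converse_rtranclp_into_rtranclp)

lemma white_conn_closed:
  assumes "white_conn E W w v" and "w \<in> X"
    and closed: "\<And>a b. a \<in> X \<Longrightarrow> b \<in> W \<Longrightarrow> E a b \<Longrightarrow> b \<in> X"
  shows "v \<in> X"
proof -
  have "(\<lambda>a b. a \<in> W \<and> b \<in> W \<and> E a b)\<^sup>*\<^sup>* w v"
    using assms(1) by (simp add: white_conn_def)
  then show ?thesis
    using assms(2) by induction (auto intro: closed)
qed

lemma psd_reach_subset:
  assumes "psd_reach n E S B" and "S \<subseteq> {0..<n}"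
  shows "B \<subseteq> {0..<n}"
  using assms by induction (auto simp: psd_force_def)

lemma mat_kernel_row_sum_eq_0:
  assumes A: "A \<in> carrier_mat nr nc" and x: "x \<in> mat_kernel A" and i: "i < nr"
  shows "(\<Sum>j<nc. A $$ (i, j) * x $ j) = 0"
proof -
  have "x = vec nc (($) x)" using mat_kernelD(1)[OF A x] by auto
  then have "(A *\<^sub>v vec nc (($) x)) $ i = 0"
    using mat_kernelD(2)[OF A x] i by (metis index_zero_vec(1))
  then show ?thesis using mult_mat_vec_vec_index[OF A i] by simp
qed

text \<open>No edge leaves C inside the white set and x vanishes on the blue set, so the parts y and
  x - y of x on and off C are A-orthogonal. Their forms are nonnegative and add up to the form
  of x, which is 0; hence the form of y vanishes and A y = 0.\<close>

lemma kernel_vec_restrict_white_closed: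
  assumes AG: "A \<in> graph_psd_mats n E" and x: "x \<in> mat_kernel A"
    and xB: "\<forall>i\<in>B. x $ i = 0" and C: "C \<subseteq> {0..<n} - B"
    and closed: "\<And>i j. i \<in> C \<Longrightarrow> j \<in> {0..<n} - B \<Longrightarrow> E i j \<Longrightarrow> j \<in> C"
    and i: "i < n"
  shows "(\<Sum>j<n. A $$ (i, j) * (if j \<in> C then x $ j else 0)) = 0"
proof -
  have A: "A \<in> carrier_mat n n" and psd: "psd_mat A"
    and pattern: "\<And>i j. i < n \<Longrightarrow> j < n \<Longrightarrow> i \<noteq> j \<Longrightarrow> A $$ (i, j) \<noteq> 0 \<longleftrightarrow> E i j"
    using AG by (auto simp: graph_psd_mats_def)
  have sym: "A\<^sup>T = A" using psd by (simp add: psd_mat_def)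
  define y where "y j = (if j \<in> C then x $ j else 0)" for j
  define z where "z j = x $ j - y j" for j
  have z_row: "(\<Sum>j<n. A $$ (k, j) * z j) = 0" if "k \<in> C" for k
  proof (intro sum.neutral ballI)
    fix j assume j: "j \<in> {..<n}"
    show "A $$ (k, j) * z j = 0"
    proof (cases "j \<in> {0..<n} - B - C")
      case True
      then have "j \<noteq> k" and "\<not> E k j" using that closed[of k j] by auto
      then show ?thesis using pattern[of k j] that C j by auto
    next
      case False
      then show ?thesis using j xB C by (auto simp: z_def y_def)
    qed
  qed
  have "bilin_form A y z = 0"
    using A z_row by (simp add: bilin_form_def y_def)
  moreover have "bilin_form A (($) x) (($) x) = 0"
    using A mat_kernel_row_sum_eq_0[OF A x] by (simp add: bilin_form_def)
  ultimately have "bilin_form A y y + bilin_form A z z = 0"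
    using bilin_form_add_smult[of A y 1 z] bilin_form_commute[OF A sym, of z y]
    by (simp add: z_def)
  then have "bilin_form A y y = 0"
    using bilin_form_nonneg_if_psd_mat[OF psd] by (metis add_nonneg_eq_0_iff)
  then have "(\<Sum>j<n. A $$ (i, j) * y j) = 0"
    by (rule psd_mat_row_sum_eq_0_if_bilin_form_eq_0[OF A psd _ i])
  then show ?thesis by (simp only: y_def)
qed

text \<open>Take for C the white component of v: the only entry of row u inside C is A u v \<noteq> 0.\<close>

lemma kernel_vec_zero_at_forced_vertex:
  assumes AG: "A \<in> graph_psd_mats n E" and x: "x \<in> mat_kernel A"
    and B: "B \<subseteq> {0..<n}" and xB: "\<forall>i\<in>B. x $ i = 0" and force: "psd_force n E B u v"
  shows "x $ v = 0"
proof -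
  have pattern: "\<And>i j. i < n \<Longrightarrow> j < n \<Longrightarrow> i \<noteq> j \<Longrightarrow> A $$ (i, j) \<noteq> 0 \<longleftrightarrow> E i j"
    using AG by (auto simp: graph_psd_mats_def)
  define W where "W = {0..<n} - B"
  define C where "C = {w. white_conn E W w v}"
  have u: "u \<in> B" and v: "v \<in> W" "E u v"
    and unique: "\<And>w. w \<in> W \<Longrightarrow> E u w \<Longrightarrow> w \<noteq> v \<Longrightarrow> w \<notin> C"
    using force by (auto simp: psd_force_def W_def C_def)
  have CW: "C \<subseteq> W" and vC: "v \<in> C"
    using v by (auto simp: C_def white_conn_def)
  have un: "u < n" and vn: "v < n" using u v B by (auto simp: W_def)
  have closed: "j \<in> C" if "i \<in> C" "j \<in> W" "E i j" for i j
    using white_conn_step[of E W i v j] graph_psd_mats_edge_sym[OF AG, of i j] that CW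
    by (auto simp: C_def W_def)
  have "(\<Sum>j<n. A $$ (u, j) * (if j \<in> C then x $ j else 0)) = 0"
    by (rule kernel_vec_restrict_white_closed[OF AG x xB _ _ un])
      (use CW closed in \<open>auto simp: W_def\<close>)
  moreover have "(\<Sum>j<n. A $$ (u, j) * (if j \<in> C then x $ j else 0)) =
      (\<Sum>j<n. if j = v then A $$ (u, v) * x $ v else 0)"
  proof (intro sum.cong refl)
    fix j assume "j \<in> {..<n}"
    have "A $$ (u, j) = 0" if "j \<in> C" "j \<noteq> v"
      using that CW unique[of j] pattern[of u j] un u \<open>j \<in> {..<n}\<close> by (auto simp: W_def)
    then show "A $$ (u, j) * (if j \<in> C then x $ j else 0) = (if j = v then A $$ (u, v) * x $ v else 0)"
      using vC by auto
  qed
  moreover have "A $$ (u, v) \<noteq> 0"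
    using pattern[OF un vn] u v by (auto simp: W_def)
  ultimately show ?thesis using vn by simp
qed

lemma kernel_vec_zero_on_psd_reach:
  assumes AG: "A \<in> graph_psd_mats n E" and x: "x \<in> mat_kernel A"
    and reach: "psd_reach n E S B" and S: "S \<subseteq> {0..<n}" and xS: "\<forall>i\<in>S. x $ i = 0"
  shows "\<forall>i\<in>B. x $ i = 0"
  using reach
proof induction
  case init
  then show ?case by (rule xS)
next
  case (step B u v)
  then show ?case
    using kernel_vec_zero_at_forced_vertex[OF AG x psd_reach_subset[OF step.hyps(1) S]] by simp
qed

lemma psd_force_if_unique_white_neighbor:
  assumes "u \<in> B" and "v < n" and "v \<notin> B" and "E u v"
    and "\<And>w. w < n \<Longrightarrow> w \<notin> B \<Longrightarrow> E u w \<Longrightarrow> w = v"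
  shows "psd_force n E B u v"
  unfolding psd_force_def
proof (intro conjI allI impI)
  show "u \<in> B" and "v \<in> {0..<n} - B" and "E u v" using assms(1-4) by auto
  fix w assume "w \<in> {0..<n} - B \<and> E u w \<and> w \<noteq> v"
  then show "\<not> white_conn E ({0..<n} - B) w v" using assms(5)[of w] by auto
qed

lemma psd_reach_union_forced:
  assumes reach: "psd_reach n E S B" and F: "F \<subseteq> {0..<n}"
    and forcer: "\<And>v. v \<in> F \<Longrightarrow> \<exists>u\<in>B. E u v \<and> (\<forall>w<n. E u w \<longrightarrow> w \<noteq> v \<longrightarrow> w \<in> B)"
  shows "psd_reach n E S (B \<union> F)"
proof -
  have "finite F" using F finite_subset by blast
  moreover have "\<forall>v\<in>F. \<exists>u\<in>B. E u v \<and> (\<forall>w<n. E u w \<longrightarrow> w \<noteq> v \<longrightarrow> w \<in> B)"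
    using forcer by blast
  ultimately show ?thesis using F
  proof (induction F)
    case empty
    then show ?case using reach by simp
  next
    case (insert v F)
    then have IH: "psd_reach n E S (B \<union> F)" by blast
    obtain u where u: "u \<in> B" "E u v" "\<forall>w<n. E u w \<longrightarrow> w \<noteq> v \<longrightarrow> w \<in> B"
      using insert.prems by blast
    show ?case
    proof (cases "v \<in> B")
      case True
      then show ?thesis using IH by (simp add: insert_absorb)
    next
      case False
      have "psd_force n E (B \<union> F) u v"
        using u False insert.hyps(2) insert.prems(2)
        by (intro psd_force_if_unique_white_neighbor) auto
      from psd_reach.step[OF IH this] show ?thesis by simp
    qed
  qed
qed

section \<open>Nullity bounds\<close>

lemma (in vec_space) lin_indpt_image_if_coords_indpt:
  fixes v :: "'i \<Rightarrow> 'a vec"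
  assumes I: "finite I" and v: "v ` I \<subseteq> carrier_vec n"
    and indpt: "\<And>c. (\<And>k. k < n \<Longrightarrow> (\<Sum>i\<in>I. c i * v i $ k) = 0) \<Longrightarrow> \<forall>i\<in>I. c i = 0"
  shows "inj_on v I" and "lin_indpt (v ` I)"
proof -
  show inj: "inj_on v I"
  proof (rule inj_onI, rule ccontr)
    fix i j assume ij: "i \<in> I" "j \<in> I" "v i = v j" "i \<noteq> j"
    define c where "c l = (if l = i then 1 else if l = j then -1 else 0 :: 'a)" for l
    have "(\<Sum>l\<in>I. c l * v l $ k) = 0" for k
    proof -
      have "(\<Sum>l\<in>I. c l * v l $ k) =
          (\<Sum>l\<in>I. (if l = i then v i $ k else 0) - (if l = j then v j $ k else 0))"
        using ij by (intro sum.cong) (auto simp: c_def)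
      also have "\<dots> = v i $ k - v j $ k"
        using ij by (simp only: sum_subtractf sum.delta[OF I] if_True)
      finally show ?thesis using ij(3) by simp
    qed
    then have "c i = 0" using indpt[of c] ij(1) by blast
    then show False by (simp add: c_def)
  qed
  show "lin_indpt (v ` I)"
  proof (rule finite_lin_indpt2)
    show "finite (v ` I)" using I by simp
    show "v ` I \<subseteq> carrier_vec n" by (rule v)
    fix a assume "True" \<comment> \<open>coefficients range over carrier class_ring = UNIV\<close>
      and "lincomb a (v ` I) = 0\<^sub>v n"
    then have "(\<Sum>i\<in>I. a (v i) * v i $ k) = 0" if "k < n" for k
      using lincomb_index[OF that v, of a] sum.reindex[OF inj, of "\<lambda>w. a w * w $ k"] that by simp
    then show "\<forall>w\<in>v ` I. a w = 0"
      using indpt[of "a \<circ> v"] by simp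
  qed
qed

lemma (in vec_space) card_le_dim_if_coords_indpt:
  fixes v :: "'i \<Rightarrow> 'a vec"
  assumes I: "finite I" and v: "v ` I \<subseteq> carrier_vec n"
    and indpt: "\<And>c. (\<And>k. k < n \<Longrightarrow> (\<Sum>i\<in>I. c i * v i $ k) = 0) \<Longrightarrow> \<forall>i\<in>I. c i = 0"
  shows "card I \<le> n"
proof -
  have "card (v ` I) \<le> dim"
    using li_le_dim(2)[OF fin_dim _ lin_indpt_image_if_coords_indpt(2)[OF I v indpt]] v
    by (simp only: carrier_vec_def module_vec_simps)
  moreover have "card (v ` I) = card I"
    by (rule card_image[OF lin_indpt_image_if_coords_indpt(1)[OF I v indpt]])
  ultimately show ?thesis using dim_is_n by linarith
qed

lemma card_le_kernel_dim_if_coords_indpt: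
  fixes A :: "'a :: field mat"
  assumes A: "A \<in> carrier_mat nr nc" and I: "finite I" and v: "v ` I \<subseteq> mat_kernel A"
    and indpt: "\<And>c. (\<And>k. k < nc \<Longrightarrow> (\<Sum>i\<in>I. c i * v i $ k) = 0) \<Longrightarrow> \<forall>i\<in>I. c i = 0"
  shows "card I \<le> kernel_dim A"
proof -
  interpret K: kernel nr nc A by unfold_locales (rule A)
  have carrier: "v ` I \<subseteq> carrier_vec nc" using v mat_kernel_carrier[OF A] by (rule order_trans)
  have "K.lin_indpt (v ` I)"
    using K.NC.lin_indpt_image_if_coords_indpt(2)[OF I carrier indpt] K.lindep_same[OF v] by simp
  moreover obtain \<beta> where "finite \<beta>" "K.basis \<beta>" using kernel_basis_exists[OF A] by blast
  then have "K.Ker.fin_dim" unfolding K.Ker.fin_dim_def K.Ker.basis_def by blast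
  ultimately have "card (v ` I) \<le> K.dim"
    using K.Ker.li_le_dim(2) v by blast
  moreover have "card (v ` I) = card I"
    by (rule card_image[OF K.NC.lin_indpt_image_if_coords_indpt(1)[OF I carrier indpt]])
  ultimately show ?thesis using K.kernel_dim by linarith
qed

lemma kernel_dim_le_card_if_determined:
  fixes A :: "'a :: field mat"
  assumes A: "A \<in> carrier_mat nr nc" and S: "S \<subseteq> {0..<nc}"
    and determined: "\<And>x. x \<in> mat_kernel A \<Longrightarrow> \<forall>i\<in>S. x $ i = 0 \<Longrightarrow> x = 0\<^sub>v nc"
  shows "kernel_dim A \<le> card S"
proof -
  interpret K: kernel nr nc A by unfold_locales (rule A)
  interpret V: vec_space "TYPE('a)" "card S" .
  obtain \<beta> where \<beta>: "finite \<beta>" "K.basis \<beta>" using kernel_basis_exists[OF A] by blast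
  then have dim: "kernel_dim A = card \<beta>" and \<beta>K: "\<beta> \<subseteq> mat_kernel A" and li: "K.lin_indpt \<beta>"
    using K.Ker.dim_basis by (auto simp: K.Ker.basis_def)
  obtain ix where ix: "bij_betw ix {0..<card S} S"
    using ex_bij_betw_nat_finite finite_subset[OF S] by blast
  define restr where "restr b = vec (card S) (\<lambda>k. b $ ix k)" for b :: "'a vec"
  have "card \<beta> \<le> card S"
  proof (rule V.card_le_dim_if_coords_indpt[of \<beta> restr])
    show "finite \<beta>" and "restr ` \<beta> \<subseteq> carrier_vec (card S)"
      using \<beta> by (auto simp: restr_def)
    fix c assume zero: "\<And>k. k < card S \<Longrightarrow> (\<Sum>b\<in>\<beta>. c b * restr b $ k) = 0"
    have "\<forall>i\<in>S. K.lincomb c \<beta> $ i = 0"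
    proof
      fix i assume "i \<in> S"
      then have "i \<in> ix ` {0..<card S}" using ix by (simp add: bij_betw_def)
      then obtain k where k: "k < card S" "i = ix k" by auto
      have "i < nc" using \<open>i \<in> S\<close> S by auto
      then show "K.lincomb c \<beta> $ i = 0"
        using K.lincomb_index[OF _ \<beta>K] zero[OF k(1)] k by (simp add: restr_def)
    qed
    moreover have "K.lincomb c \<beta> \<in> mat_kernel A"
      using \<beta>K by (intro K.Ker.lincomb_closed) auto
    ultimately have "K.lincomb c \<beta> = 0\<^sub>v nc" using determined by blast
    then show "\<forall>b\<in>\<beta>. c b = 0"
      using K.Ker.not_lindepD[OF li \<beta>(1) subset_refl] by (auto simp: class_ring_simps)
  qed
  then show ?thesis using dim by simp
qed

lemma kernel_dim_le_card_psd_zero_forcing_set: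
  assumes AG: "A \<in> graph_psd_mats n E" and S: "psd_zero_forcing_set n E S"
  shows "kernel_dim A \<le> card S"
proof (rule kernel_dim_le_card_if_determined)
  show A: "A \<in> carrier_mat n n" using AG by (simp add: graph_psd_mats_def)
  show "S \<subseteq> {0..<n}" using S by (simp add: psd_zero_forcing_set_def)
  fix x assume "x \<in> mat_kernel A" and "\<forall>i\<in>S. x $ i = 0"
  then have "\<forall>i\<in>{0..<n}. x $ i = 0"
    using kernel_vec_zero_on_psd_reach[OF AG] S by (auto simp: psd_zero_forcing_set_def)
  then show "x = 0\<^sub>v n" using mat_kernelD(1)[OF A \<open>x \<in> mat_kernel A\<close>] by auto
qed

lemma Zplus_Mplus_eq_card:
  assumes S: "psd_zero_forcing_set n E S" and AG: "A \<in> graph_psd_mats n E"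
    and le: "card S \<le> kernel_dim A"
  shows "Zplus n E = card S" and "Mplus n E = card S"
proof -
  show "Zplus n E = card S"
    unfolding Zplus_def
  proof (rule Least_equality)
    show "\<exists>T. psd_zero_forcing_set n E T \<and> card T = card S" using S by blast
    fix k assume "\<exists>T. psd_zero_forcing_set n E T \<and> card T = k"
    then show "card S \<le> k"
      using le kernel_dim_le_card_psd_zero_forcing_set[OF AG] by (blast intro: order_trans)
  qed
  have "kernel_dim A = card S"
    using le kernel_dim_le_card_psd_zero_forcing_set[OF AG S] by simp
  show "Mplus n E = card S"
    unfolding Mplus_def
  proof (rule Greatest_equality)
    show "\<exists>B\<in>graph_psd_mats n E. kernel_dim B = card S"
      using AG \<open>kernel_dim A = card S\<close> by blast
    fix k assume "\<exists>B\<in>graph_psd_mats n E. kernel_dim B = k"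
    then show "k \<le> card S" using kernel_dim_le_card_psd_zero_forcing_set S by blast
  qed
qed

section \<open>Cells of the grid\<close>

definition cell :: "nat \<Rightarrow> nat \<Rightarrow> nat \<Rightarrow> nat" where
  "cell r a b = a * r + b"

lemma cell_div [simp]: "b < r \<Longrightarrow> cell r a b div r = a"
  by (simp add: cell_def)

lemma cell_mod [simp]: "b < r \<Longrightarrow> cell r a b mod r = b"
  by (simp add: cell_def)

lemma cell_less_square [simp]:
  assumes "a < r" and "b < r"
  shows "cell r a b < r * r"
proof -
  have "cell r a b < (a + 1) * r" using assms(2) by (simp add: cell_def)
  also have "\<dots> \<le> r * r" using assms(1) by (intro mult_right_mono) auto
  finally show ?thesis .
qed

lemma cell_eq_iff [simp]: "b < r \<Longrightarrow> d < r \<Longrightarrow> cell r a b = cell r c d \<longleftrightarrow> a = c \<and> b = d"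
  by (metis cell_div cell_mod)

lemma cell_cases:
  assumes "x < r * r"
  obtains a b where "a < r" and "b < r" and "x = cell r a b"
proof
  show "x div r < r" using assms by (simp add: less_mult_imp_div_less)
  show "x mod r < r" using assms by (cases "r = 0") auto
  show "x = cell r (x div r) (x mod r)" by (simp add: cell_def)
qed

lemma all_less_square_iff_all_cells: "(\<forall>x<r * r. P x) \<longleftrightarrow> (\<forall>a<r. \<forall>b<r. P (cell r a b))"
  by (metis cell_cases cell_less_square)

lemma sum_less_square_eq_sum_cells: "(\<Sum>x<r * r. g x) = (\<Sum>a<r. \<Sum>b<r. g (cell r a b))"
proof -
  have "sum g {a * r..<a * r + r} = (\<Sum>b<r. g (cell r a b))" for a
    using sum.shift_bounds_nat_ivl[of g 0 "a * r" r]
    by (simp add: cell_def add.commute atLeast0LessThan)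
  then show ?thesis using sum.nat_group[of g r r] by simp
qed

lemma Kr_box_Kr_cell [simp]:
  "a < r \<Longrightarrow> b < r \<Longrightarrow> c < r \<Longrightarrow> d < r \<Longrightarrow>
   Kr_box_Kr r (cell r a b) (cell r c d) \<longleftrightarrow> (a = c \<and> b \<noteq> d) \<or> (b = d \<and> a \<noteq> c)"
  by (auto simp: Kr_box_Kr_def)

section \<open>A PSD zero forcing set of the grid\<close>

definition seed_cells :: "nat \<Rightarrow> (nat \<times> nat) set" where
  "seed_cells r = {(a, b). a < r \<and> b < r \<and> (a = 0 \<longleftrightarrow> b = 0)}"

definition seed :: "nat \<Rightarrow> nat set" where
  "seed r = (\<lambda>(a, b). cell r a b) ` seed_cells r"

lemma card_seed_cells:
  assumes "1 \<le> r"
  shows "card (seed_cells r) = (r - 1)\<^sup>2 + 1"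
proof -
  have "seed_cells r = insert (0, 0) ({1..<r} \<times> {1..<r})"
    using assms by (auto simp: seed_cells_def)
  then show ?thesis by (simp add: card_cartesian_product power2_eq_square)
qed

lemma card_seed:
  assumes "1 \<le> r"
  shows "card (seed r) = (r - 1)\<^sup>2 + 1"
proof -
  have "inj_on (\<lambda>(a, b). cell r a b) (seed_cells r)"
    by (auto simp: seed_cells_def inj_on_def)
  then show ?thesis using card_seed_cells[OF assms] by (simp add: seed_def card_image)
qed

lemma cell_in_seed_iff [simp]:
  "a < r \<Longrightarrow> b < r \<Longrightarrow> cell r a b \<in> seed r \<longleftrightarrow> (a = 0 \<longleftrightarrow> b = 0)"
  by (force simp: seed_def seed_cells_def)

lemma seed_subset: "seed r \<subseteq> {0..<r * r}"
  by (auto simp: seed_def seed_cells_def)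

lemma seed_psd_force:
  assumes r: "2 \<le> r"
  shows "psd_force (r * r) (Kr_box_Kr r) (seed r) (cell r 1 1) (cell r 1 0)"
proof -
  define W where "W = {0..<r * r} - seed r"
  define X where "X = cell r 0 ` {1..<r}"
  have closed: "q \<in> X" if "p \<in> X" "q \<in> W" "Kr_box_Kr r p q" for p q
  proof -
    obtain b where b: "1 \<le> b" "b < r" "p = cell r 0 b" using \<open>p \<in> X\<close> by (auto simp: X_def)
    have "q < r * r" using \<open>q \<in> W\<close> by (simp add: W_def)
    then obtain c d where cd: "c < r" "d < r" "q = cell r c d" by (rule cell_cases)
    show ?thesis using that b cd by (auto simp: W_def X_def)
  qed
  have "\<not> white_conn (Kr_box_Kr r) W w (cell r 1 0)"
    if "w \<in> W" "Kr_box_Kr r (cell r 1 1) w" "w \<noteq> cell r 1 0" for w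
  proof
    assume conn: "white_conn (Kr_box_Kr r) W w (cell r 1 0)"
    have "w < r * r" using \<open>w \<in> W\<close> by (simp add: W_def)
    then obtain c d where cd: "c < r" "d < r" "w = cell r c d" by (rule cell_cases)
    then have "w \<in> X" using that r by (auto simp: W_def X_def)
    then have "cell r 1 0 \<in> X" using white_conn_closed[OF conn] closed by blast
    then show False using r by (auto simp: X_def)
  qed
  then show ?thesis using r by (auto simp: psd_force_def W_def)
qed

lemma seed_psd_reach_row_zero:
  assumes r: "2 \<le> r"
  shows "psd_reach (r * r) (Kr_box_Kr r) (seed r)
    (insert (cell r 1 0) (seed r) \<union> cell r 0 ` {1..<r})"
proof (rule psd_reach_union_forced)
  show "psd_reach (r * r) (Kr_box_Kr r) (seed r) (insert (cell r 1 0) (seed r))"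
    using psd_reach.step[OF psd_reach.init seed_psd_force[OF r]] .
  show "cell r 0 ` {1..<r} \<subseteq> {0..<r * r}" by auto
  fix v assume "v \<in> cell r 0 ` {1..<r}"
  then obtain b where b: "1 \<le> b" "b < r" "v = cell r 0 b" by auto
  show "\<exists>u\<in>insert (cell r 1 0) (seed r). Kr_box_Kr r u v \<and>
      (\<forall>w<r * r. Kr_box_Kr r u w \<longrightarrow> w \<noteq> v \<longrightarrow> w \<in> insert (cell r 1 0) (seed r))"
  proof (intro bexI conjI)
    show "cell r 1 b \<in> insert (cell r 1 0) (seed r)" using b by simp
    show "Kr_box_Kr r (cell r 1 b) v" using b r by simp
    show "\<forall>w<r * r. Kr_box_Kr r (cell r 1 b) w \<longrightarrow> w \<noteq> v \<longrightarrow> w \<in> insert (cell r 1 0) (seed r)"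
      unfolding all_less_square_iff_all_cells using b r by auto
  qed
qed

lemma seed_union_row_column_zero:
  assumes r: "2 \<le> r"
  shows "insert (cell r 1 0) (seed r) \<union> cell r 0 ` {1..<r} \<union> (\<lambda>a. cell r a 0) ` {2..<r} =
    {0..<r * r}" (is "?B = _")
proof
  show "?B \<subseteq> {0..<r * r}" using r seed_subset by auto
  show "{0..<r * r} \<subseteq> ?B"
  proof
    fix x assume "x \<in> {0..<r * r}"
    then have "x < r * r" by simp
    then obtain a b where "a < r" "b < r" "x = cell r a b" by (rule cell_cases)
    then show "x \<in> ?B" by (cases "a = 0"; cases "b = 0"; cases "a = 1") auto
  qed
qed

lemma seed_psd_zero_forcing_set:
  assumes r: "2 \<le> r"
  shows "psd_zero_forcing_set (r * r) (Kr_box_Kr r) (seed r)"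
proof -
  define B where "B = insert (cell r 1 0) (seed r) \<union> cell r 0 ` {1..<r}"
  have "psd_reach (r * r) (Kr_box_Kr r) (seed r) (B \<union> (\<lambda>a. cell r a 0) ` {2..<r})"
  proof (rule psd_reach_union_forced)
    show "psd_reach (r * r) (Kr_box_Kr r) (seed r) B"
      unfolding B_def by (rule seed_psd_reach_row_zero[OF r])
    show "(\<lambda>a. cell r a 0) ` {2..<r} \<subseteq> {0..<r * r}" by auto
    fix v assume "v \<in> (\<lambda>a. cell r a 0) ` {2..<r}"
    then obtain a where a: "2 \<le> a" "a < r" "v = cell r a 0" by auto
    show "\<exists>u\<in>B. Kr_box_Kr r u v \<and> (\<forall>w<r * r. Kr_box_Kr r u w \<longrightarrow> w \<noteq> v \<longrightarrow> w \<in> B)"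
    proof (intro bexI conjI)
      show "cell r a 1 \<in> B" using a by (simp add: B_def)
      show "Kr_box_Kr r (cell r a 1) v" using a r by simp
      show "\<forall>w<r * r. Kr_box_Kr r (cell r a 1) w \<longrightarrow> w \<noteq> v \<longrightarrow> w \<in> B"
        unfolding all_less_square_iff_all_cells using a r by (auto simp: B_def)
    qed
  qed
  then show ?thesis
    using seed_union_row_column_zero[OF r] seed_subset by (simp add: B_def psd_zero_forcing_set_def)
qed

section \<open>A PSD matrix of large nullity\<close>

definition col_weight :: "nat \<Rightarrow> nat \<Rightarrow> real" where
  "col_weight r b = (if b = 0 then -1 else 2 * (real r - 1))"

definition Kr_box_Kr_mat :: "nat \<Rightarrow> real mat" where
  "Kr_box_Kr_mat r = mat (r * r) (r * r) (\<lambda>(x, y).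
     (if x div r = y div r then 2 * real r else 0) +
     (if x mod r = y mod r then col_weight r (x mod r) else 0))"

lemma Kr_box_Kr_mat_carrier: "Kr_box_Kr_mat r \<in> carrier_mat (r * r) (r * r)"
  by (simp add: Kr_box_Kr_mat_def)

lemma Kr_box_Kr_mat_cell [simp]:
  "a < r \<Longrightarrow> b < r \<Longrightarrow> c < r \<Longrightarrow> d < r \<Longrightarrow> Kr_box_Kr_mat r $$ (cell r a b, cell r c d) =
     (if a = c then 2 * real r else 0) + (if b = d then col_weight r b else 0)"
  by (simp add: Kr_box_Kr_mat_def)

lemma col_weight_nonzero: "2 \<le> r \<Longrightarrow> col_weight r b \<noteq> 0"
  by (simp add: col_weight_def)

lemma Kr_box_Kr_mat_row_sum:
  assumes a: "a < r" and b: "b < r"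
  shows "(\<Sum>y<r * r. Kr_box_Kr_mat r $$ (cell r a b, y) * f y) =
    2 * real r * (\<Sum>d<r. f (cell r a d)) + col_weight r b * (\<Sum>c<r. f (cell r c b))"
proof -
  have "(\<Sum>y<r * r. Kr_box_Kr_mat r $$ (cell r a b, y) * f y) =
      (\<Sum>c<r. \<Sum>d<r. (if a = c then 2 * real r * f (cell r c d) else 0) +
        (if b = d then col_weight r b * f (cell r c d) else 0))"
    unfolding sum_less_square_eq_sum_cells using a b by (intro sum.cong refl) (simp add: distrib_right)
  also have "\<dots> = (\<Sum>d<r. \<Sum>c<r. if a = c then 2 * real r * f (cell r c d) else 0) +
      (\<Sum>c<r. \<Sum>d<r. if b = d then col_weight r b * f (cell r c d) else 0)"
    by (simp add: sum.distrib sum.swap[of _ "{..<r}" "{..<r}"])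
  also have "\<dots> = 2 * real r * (\<Sum>d<r. f (cell r a d)) + col_weight r b * (\<Sum>c<r. f (cell r c b))"
    using a b by (simp add: sum.delta' sum_distrib_left)
  finally show ?thesis .
qed

lemma bilin_form_Kr_box_Kr_mat:
  "bilin_form (Kr_box_Kr_mat r) f f =
    2 * real r * (\<Sum>a<r. (\<Sum>b<r. f (cell r a b))\<^sup>2) + (\<Sum>b<r. col_weight r b * (\<Sum>a<r. f (cell r a b))\<^sup>2)"
proof -
  define R where "R a = (\<Sum>b<r. f (cell r a b))" for a
  define C where "C b = (\<Sum>a<r. f (cell r a b))" for b
  have row: "(\<Sum>b<r. 2 * real r * R a * f (cell r a b)) = 2 * real r * R a * R a" for a
    unfolding R_def by (rule sum_distrib_left[symmetric])
  have col: "(\<Sum>a<r. col_weight r b * C b * f (cell r a b)) = col_weight r b * C b * C b" for b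
    unfolding C_def by (rule sum_distrib_left[symmetric])
  have swap: "(\<Sum>a<r. \<Sum>b<r. col_weight r b * C b * f (cell r a b)) =
      (\<Sum>b<r. \<Sum>a<r. col_weight r b * C b * f (cell r a b))"
    by (rule sum.swap)
  have dims: "dim_row (Kr_box_Kr_mat r) = r * r" "dim_col (Kr_box_Kr_mat r) = r * r"
    by (simp_all add: Kr_box_Kr_mat_def)
  have "bilin_form (Kr_box_Kr_mat r) f f =
      (\<Sum>x<r * r. f x * (\<Sum>y<r * r. Kr_box_Kr_mat r $$ (x, y) * f y))"
    by (simp only: bilin_form_def dims)
  also have "\<dots> = (\<Sum>a<r. \<Sum>b<r. f (cell r a b) *
      (\<Sum>y<r * r. Kr_box_Kr_mat r $$ (cell r a b, y) * f y))"
    by (rule sum_less_square_eq_sum_cells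
        [where g = "\<lambda>x. f x * (\<Sum>y<r * r. Kr_box_Kr_mat r $$ (x, y) * f y)"])
  also have "\<dots> = (\<Sum>a<r. \<Sum>b<r. f (cell r a b) * (2 * real r * R a + col_weight r b * C b))"
    by (intro sum.cong refl) (simp add: Kr_box_Kr_mat_row_sum R_def C_def)
  also have "\<dots> = (\<Sum>a<r. \<Sum>b<r. 2 * real r * R a * f (cell r a b)) +
      (\<Sum>a<r. \<Sum>b<r. col_weight r b * C b * f (cell r a b))"
    by (simp add: sum.distrib algebra_simps)
  also have "\<dots> = (\<Sum>a<r. 2 * real r * R a * R a) + (\<Sum>b<r. col_weight r b * C b * C b)"
    by (simp only: swap row col)
  also have "\<dots> = 2 * real r * (\<Sum>a<r. (R a)\<^sup>2) + (\<Sum>b<r. col_weight r b * (C b)\<^sup>2)"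
    by (simp add: sum_distrib_left power2_eq_square mult.assoc)
  finally show ?thesis by (simp only: R_def C_def)
qed

lemma sum_squared_le_card_mult_sum_squares:
  fixes g :: "'a \<Rightarrow> real"
  assumes "finite A"
  shows "(\<Sum>i\<in>A. g i)\<^sup>2 \<le> real (card A) * (\<Sum>i\<in>A. (g i)\<^sup>2)"
proof -
  have "(\<Sum>i\<in>A. \<Sum>j\<in>A. (g i - g j)\<^sup>2) =
      (\<Sum>i\<in>A. \<Sum>j\<in>A. (g i)\<^sup>2) + (\<Sum>i\<in>A. \<Sum>j\<in>A. (g j)\<^sup>2) - 2 * (\<Sum>i\<in>A. \<Sum>j\<in>A. g i * g j)"
    by (simp add: power2_diff sum.distrib sum_subtractf sum_distrib_left mult.assoc)
  also have "\<dots> = 2 * (real (card A) * (\<Sum>i\<in>A. (g i)\<^sup>2) - (\<Sum>i\<in>A. g i)\<^sup>2)"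
    by (simp add: sum_distrib_left mult.commute power2_eq_square sum_product)
  finally have "(\<Sum>i\<in>A. \<Sum>j\<in>A. (g i - g j)\<^sup>2) =
      2 * (real (card A) * (\<Sum>i\<in>A. (g i)\<^sup>2) - (\<Sum>i\<in>A. g i)\<^sup>2)" .
  moreover have "0 \<le> (\<Sum>i\<in>A. \<Sum>j\<in>A. (g i - g j)\<^sup>2)" by (intro sum_nonneg) auto
  ultimately show ?thesis by simp
qed

text \<open>With T the common total of R and C and Y = T - C 0, Cauchy-Schwarz bounds the form
  below by 2 T^2 - (C 0)^2 + 2 Y^2 = (C 0 + 2 Y)^2.\<close>

lemma grid_form_nonneg:
  fixes R C :: "nat \<Rightarrow> real"
  assumes r: "2 \<le> r" and sums: "(\<Sum>a<r. R a) = (\<Sum>b<r. C b)"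
  shows "0 \<le> 2 * real r * (\<Sum>a<r. (R a)\<^sup>2) + (\<Sum>b<r. col_weight r b * (C b)\<^sup>2)"
proof -
  have split: "{..<r} = insert 0 {1..<r}" using r by auto
  define Y where "Y = (\<Sum>b\<in>{1..<r}. C b)"
  define Q where "Q = (\<Sum>b\<in>{1..<r}. (C b)\<^sup>2)"
  have "(\<Sum>b<r. C b) = C 0 + Y" unfolding split Y_def by simp
  then have T: "(\<Sum>a<r. R a) = C 0 + Y" using sums by linarith
  have weighted: "(\<Sum>b<r. col_weight r b * (C b)\<^sup>2) = 2 * (real r - 1) * Q - (C 0)\<^sup>2"
    unfolding split Q_def by (simp add: col_weight_def sum_distrib_left)
  have "(C 0 + Y)\<^sup>2 \<le> real r * (\<Sum>a<r. (R a)\<^sup>2)"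
    using sum_squared_le_card_mult_sum_squares[of "{..<r}" R] T by simp
  moreover have "Y\<^sup>2 \<le> (real r - 1) * Q"
    using sum_squared_le_card_mult_sum_squares[of "{1..<r}" C] r
    unfolding Y_def Q_def by (simp add: of_nat_diff)
  ultimately have "0 \<le> 2 * (real r * (\<Sum>a<r. (R a)\<^sup>2) - (C 0 + Y)\<^sup>2) +
      2 * ((real r - 1) * Q - Y\<^sup>2) + (C 0 + 2 * Y)\<^sup>2"
    by simp
  also have "\<dots> = 2 * real r * (\<Sum>a<r. (R a)\<^sup>2) + (2 * (real r - 1) * Q - (C 0)\<^sup>2)"
    by (simp add: power2_eq_square algebra_simps)
  finally show ?thesis unfolding weighted .
qed

lemma Kr_box_Kr_mat_in_graph_psd_mats:
  assumes r: "2 \<le> r"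
  shows "Kr_box_Kr_mat r \<in> graph_psd_mats (r * r) (Kr_box_Kr r)"
proof -
  let ?B = "Kr_box_Kr_mat r"
  have car: "?B \<in> carrier_mat (r * r) (r * r)" by (rule Kr_box_Kr_mat_carrier)
  have sym: "?B\<^sup>T = ?B"
    by (rule eq_matI) (auto simp: Kr_box_Kr_mat_def)
  have nonneg: "0 \<le> x \<bullet> (?B *\<^sub>v x)" if "x \<in> carrier_vec (r * r)" for x
  proof -
    have "x = vec (r * r) (($) x)" using that by auto
    then have "x \<bullet> (?B *\<^sub>v x) = bilin_form ?B (($) x) (($) x)"
      using scalar_prod_mult_mat_vec_eq_bilin_form[OF car] by metis
    then show ?thesis
      unfolding bilin_form_Kr_box_Kr_mat using grid_form_nonneg[OF r sum.swap] by simp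
  qed
  have pattern: "?B $$ (x, y) \<noteq> 0 \<longleftrightarrow> Kr_box_Kr r x y"
    if "x < r * r" "y < r * r" "x \<noteq> y" for x y
  proof -
    obtain a b c d where "a < r" "b < r" "c < r" "d < r" "x = cell r a b" "y = cell r c d"
      using cell_cases[OF \<open>x < r * r\<close>] cell_cases[OF \<open>y < r * r\<close>] by metis
    then show ?thesis using that col_weight_nonzero[OF r] r by auto
  qed
  show ?thesis
    using car sym nonneg pattern by (auto simp: graph_psd_mats_def psd_mat_def)
qed

definition grid_vec :: "nat \<Rightarrow> (nat \<Rightarrow> nat \<Rightarrow> real) \<Rightarrow> real vec" where
  "grid_vec r F = vec (r * r) (\<lambda>x. F (x div r) (x mod r))"

lemma grid_vec_cell [simp]: "a < r \<Longrightarrow> b < r \<Longrightarrow> grid_vec r F $ cell r a b = F a b"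
  by (simp add: grid_vec_def)

lemma grid_vec_in_kernel:
  assumes "\<And>a b. a < r \<Longrightarrow> b < r \<Longrightarrow>
    2 * real r * (\<Sum>d<r. F a d) + col_weight r b * (\<Sum>c<r. F c b) = 0"
  shows "grid_vec r F \<in> mat_kernel (Kr_box_Kr_mat r)"
proof (rule mat_kernelI[OF Kr_box_Kr_mat_carrier])
  show "grid_vec r F \<in> carrier_vec (r * r)" by (simp add: grid_vec_def)
  show "Kr_box_Kr_mat r *\<^sub>v grid_vec r F = 0\<^sub>v (r * r)"
  proof (rule eq_vecI)
    fix x assume "x < dim_vec (0\<^sub>v (r * r) :: real vec)"
    then have "x < r * r" by simp
    then obtain a b where ab: "a < r" "b < r" "x = cell r a b" by (rule cell_cases)
    have "(Kr_box_Kr_mat r *\<^sub>v grid_vec r F) $ x =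
        (\<Sum>y<r * r. Kr_box_Kr_mat r $$ (cell r a b, y) * F (y div r) (y mod r))"
      using mult_mat_vec_vec_index[OF Kr_box_Kr_mat_carrier, of "cell r a b"] ab
      by (simp add: grid_vec_def)
    also have "\<dots> = 2 * real r * (\<Sum>d<r. F (cell r a d div r) (cell r a d mod r)) +
        col_weight r b * (\<Sum>c<r. F (cell r c b div r) (cell r c b mod r))"
      by (rule Kr_box_Kr_mat_row_sum[OF ab(1,2)])
    also have "(\<Sum>d<r. F (cell r a d div r) (cell r a d mod r)) = (\<Sum>d<r. F a d)"
      by (intro sum.cong) auto
    also have "(\<Sum>c<r. F (cell r c b div r) (cell r c b mod r)) = (\<Sum>c<r. F c b)"
      using ab by (intro sum.cong) auto
    finally show "(Kr_box_Kr_mat r *\<^sub>v grid_vec r F) $ x = 0\<^sub>v (r * r) $ x"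
      using assms ab \<open>x < r * r\<close> by simp
  qed (simp add: Kr_box_Kr_mat_def)
qed

text \<open>For p = (i, j) with i, j \<ge> 1 this is (e_i - e_0) \<otimes> (e_j - e_0), whose row and
  column sums vanish. For p = (0, 0) it is constant down each column, with weights chosen so
  that 2 r times a row sum cancels each weighted column sum.\<close>

definition seed_kernel_fn :: "nat \<Rightarrow> nat \<times> nat \<Rightarrow> nat \<Rightarrow> nat \<Rightarrow> real" where
  "seed_kernel_fn r p a b =
     (if p = (0, 0) then (if b = 0 then 2 * (real r - 1) else -1)
      else (of_bool (a = fst p) - of_bool (a = 0)) * (of_bool (b = snd p) - of_bool (b = 0)))"

lemma sum_of_bool_diff_eq_0:
  fixes k r :: nat
  assumes "k < r"
  shows "(\<Sum>d<r. of_bool (d = k) - of_bool (d = 0) :: real) = 0"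
proof -
  have "0 < r" using assms by simp
  then show ?thesis using assms by (simp add: sum_subtractf of_bool_def sum.delta)
qed

lemma seed_kernel_vec_in_kernel:
  assumes r: "2 \<le> r" and p: "p \<in> seed_cells r"
  shows "grid_vec r (seed_kernel_fn r p) \<in> mat_kernel (Kr_box_Kr_mat r)"
proof (rule grid_vec_in_kernel)
  fix a b assume a: "a < r" and b: "b < r"
  show "2 * real r * (\<Sum>d<r. seed_kernel_fn r p a d) + col_weight r b * (\<Sum>c<r. seed_kernel_fn r p c b) = 0"
  proof (cases "p = (0, 0)")
    case True
    have "{..<r} = insert 0 {1..<r}" using r by auto
    moreover have "(\<Sum>d\<in>{1..<r}. seed_kernel_fn r p a d) = (\<Sum>d\<in>{1..<r}. -1)"
      by (intro sum.cong) (auto simp: True seed_kernel_fn_def)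
    ultimately have row: "(\<Sum>d<r. seed_kernel_fn r p a d) = real r - 1"
      using r by (simp add: True seed_kernel_fn_def of_nat_diff)
    have col: "(\<Sum>c<r. seed_kernel_fn r p c b) = real r * seed_kernel_fn r p 0 b"
      by (simp add: True seed_kernel_fn_def)
    show ?thesis unfolding row col
      by (cases "b = 0") (simp_all add: True seed_kernel_fn_def col_weight_def algebra_simps)
  next
    case False
    then have i: "fst p < r" and j: "snd p < r" using p by (auto simp: seed_cells_def)
    have "(\<Sum>d<r. seed_kernel_fn r p a d) = (of_bool (a = fst p) - of_bool (a = 0)) *
        (\<Sum>d<r. of_bool (d = snd p) - of_bool (d = 0))"
      using False by (simp add: seed_kernel_fn_def sum_distrib_left)
    moreover have "(\<Sum>c<r. seed_kernel_fn r p c b) =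
        (\<Sum>c<r. of_bool (c = fst p) - of_bool (c = 0)) * (of_bool (b = snd p) - of_bool (b = 0))"
      using False by (simp add: seed_kernel_fn_def sum_distrib_right)
    ultimately show ?thesis using sum_of_bool_diff_eq_0[OF i] sum_of_bool_diff_eq_0[OF j] by simp
  qed
qed

text \<open>Evaluating at the seed cells: at (i, j) with i, j \<ge> 1 only the vectors for (i, j) and
  (0, 0) are nonzero, which forces all coefficients to equal c (0, 0); at (0, 0) all vectors are
  positive, which forces c (0, 0) = 0.\<close>

lemma seed_kernel_vecs_coords_indpt:
  assumes r: "2 \<le> r"
    and zero: "\<And>x. x < r * r \<Longrightarrow> (\<Sum>p\<in>seed_cells r. c p * grid_vec r (seed_kernel_fn r p) $ x) = 0"
  shows "\<forall>p\<in>seed_cells r. c p = 0"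
proof -
  define Q where "Q = {1..<r} \<times> {1..<r}"
  have seed: "seed_cells r = insert (0, 0) Q" using r by (auto simp: seed_cells_def Q_def)
  have Q: "finite Q" "(0, 0) \<notin> Q" by (auto simp: Q_def)
  have eval: "c (0, 0) * seed_kernel_fn r (0, 0) a b + (\<Sum>p\<in>Q. c p * seed_kernel_fn r p a b) = 0"
    if "a < r" "b < r" for a b
    using zero[of "cell r a b"] that Q by (simp add: seed)
  have square: "c q = c (0, 0)" if qQ: "q \<in> Q" for q
  proof -
    obtain i j where q: "q = (i, j)" "1 \<le> i" "i < r" "1 \<le> j" "j < r" using qQ by (auto simp: Q_def)
    have "(\<Sum>p\<in>Q. c p * seed_kernel_fn r p i j) = (\<Sum>p\<in>Q. if p = q then c q else 0)"
      using Q q by (intro sum.cong) (auto simp: seed_kernel_fn_def)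
    then show ?thesis using eval[of i j] q Q qQ by (simp add: seed_kernel_fn_def)
  qed
  have "(\<Sum>p\<in>Q. c p * seed_kernel_fn r p 0 0) = (\<Sum>p\<in>Q. c (0, 0))"
  proof (intro sum.cong refl)
    fix p assume "p \<in> Q"
    then have "seed_kernel_fn r p 0 0 = 1" by (auto simp: seed_kernel_fn_def Q_def)
    then show "c p * seed_kernel_fn r p 0 0 = c (0, 0)" using square[OF \<open>p \<in> Q\<close>] by simp
  qed
  then have "(2 * (real r - 1) + real (card Q)) * c (0, 0) = 0"
    using eval[of 0 0] r by (simp add: seed_kernel_fn_def algebra_simps)
  moreover have "2 * (real r - 1) + real (card Q) > 0" using r by simp
  ultimately have "c (0, 0) = 0" by simp
  then show ?thesis using square by (simp add: seed)
qed

lemma card_seed_le_kernel_dim: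
  assumes r: "2 \<le> r"
  shows "card (seed r) \<le> kernel_dim (Kr_box_Kr_mat r)"
proof -
  have "card (seed_cells r) \<le> kernel_dim (Kr_box_Kr_mat r)"
  proof (rule card_le_kernel_dim_if_coords_indpt[OF Kr_box_Kr_mat_carrier])
    show "finite (seed_cells r)"
      by (rule finite_subset[of _ "{..<r} \<times> {..<r}"]) (auto simp: seed_cells_def)
    show "(\<lambda>p. grid_vec r (seed_kernel_fn r p)) ` seed_cells r \<subseteq> mat_kernel (Kr_box_Kr_mat r)"
      using seed_kernel_vec_in_kernel[OF r] by blast
  qed (rule seed_kernel_vecs_coords_indpt[OF r])
  then show ?thesis using card_seed card_seed_cells r by simp
qed

theorem lemma3p4:
  fixes r :: nat
  assumes "r \<ge> 2"
  shows "Zplus (r * r) (Kr_box_Kr r) = (r - 1)^2 + 1 \<and>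
         Mplus (r * r) (Kr_box_Kr r) = (r - 1)^2 + 1"
  using Zplus_Mplus_eq_card[OF seed_psd_zero_forcing_set Kr_box_Kr_mat_in_graph_psd_mats
      card_seed_le_kernel_dim] card_seed assms by simp

end
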